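(* Let $X,Y,Z$ be random variables on finite alphabets $\mathcal{X},\mathcal{Y},\mathcal{Z}$. For each $y\in\mathcal{Y}$ with $\Pr(Y=y)>0$, let $(A_y,B_y,C_y)$ be the random triple on $\mathcal{X}\times\mathcal{Y}\times\mathcal{Z}$ with $\Pr(A_y=x,B_y=y',C_y=z)=0$ if $\Pr(Z=z)=0$ and $=\Pr(X=x,Y=y',Z=z)\Pr(Z=z\mid Y=y)/\Pr(Z=z)$ otherwise; and for each $x\in\mathcal{X}$ with $\Pr(X=x)>0$, let $(A_x,B_x,C_x)$ be the random triple on $\mathcal{X}\times\mathcal{Y}\times\mathcal{Z}$ with $\Pr(A_x=x',B_x=y,C_x=z)=0$ if $\Pr(Z=z)=0$ and $=\Pr(X=x',Y=y,Z=z)\Pr(Z=z\mid X=x)/\Pr(Z=z)$ otherwise. Let $(A_{Z|Y},Y)$ be the pair on $\mathcal{X}\times\mathcal{Y}$ with $\Pr(A_{Z|Y}=x,Y=y)=\Pr(Y=y)\Pr(A_y=x)$ (and $0$ if $\Pr(Y=y)=0$), and let $(X,B_{Z|X})$ be the pair on $\mathcal{X}\times\mathcal{Y}$ with $\Pr(X=x,B_{Z|X}=y)=\Pr(X=x)\Pr(B_x=y)$ (and $0$ if $\Pr(X=x)=0$). Then $I(A_{Z|Y};Y)=I(X;B_{Z|X})$.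
   Context: $I$ denotes mutual information. *)

theory Defs
  imports "HOL-Probability.Probability"
begin

text \<open>The random variables X, Y, Z on finite alphabets 'a, 'b, 'c are given by their
joint distribution P on 'a \<times> 'b \<times> 'c (X = first, Y = second, Z = third component).\<close>

definition pXYZ :: "('a \<times> 'b \<times> 'c) pmf \<Rightarrow> 'a \<Rightarrow> 'b \<Rightarrow> 'c \<Rightarrow> real" where
  "pXYZ P x y z = pmf P (x, y, z)"

definition pX :: "('a \<times> 'b \<times> 'c) pmf \<Rightarrow> 'a \<Rightarrow> real" where
  "pX P x = measure_pmf.prob P {w. fst w = x}"

definition pY :: "('a \<times> 'b \<times> 'c) pmf \<Rightarrow> 'b \<Rightarrow> real" where
  "pY P y = measure_pmf.prob P {w. fst (snd w) = y}"

definition pZ :: "('a \<times> 'b \<times> 'c) pmf \<Rightarrow> 'c \<Rightarrow> real" where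
  "pZ P z = measure_pmf.prob P {w. snd (snd w) = z}"

definition pZ_given_Y :: "('a \<times> 'b \<times> 'c) pmf \<Rightarrow> 'c \<Rightarrow> 'b \<Rightarrow> real" where
  "pZ_given_Y P z y = measure_pmf.prob P {w. fst (snd w) = y \<and> snd (snd w) = z} / pY P y"

definition pZ_given_X :: "('a \<times> 'b \<times> 'c) pmf \<Rightarrow> 'c \<Rightarrow> 'a \<Rightarrow> real" where
  "pZ_given_X P z x = measure_pmf.prob P {w. fst w = x \<and> snd (snd w) = z} / pX P x"

text \<open>The triple (A_y, B_y, C_y) (meaningful for Pr(Y = y) > 0).\<close>
definition triple_Y :: "('a \<times> 'b \<times> 'c) pmf \<Rightarrow> 'b \<Rightarrow> ('a \<times> 'b \<times> 'c) pmf" where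
  "triple_Y P y = embed_pmf (\<lambda>(x, y', z).
     if pZ P z = 0 then 0 else pXYZ P x y' z * pZ_given_Y P z y / pZ P z)"

text \<open>The triple (A_x, B_x, C_x) (meaningful for Pr(X = x) > 0).\<close>
definition triple_X :: "('a \<times> 'b \<times> 'c) pmf \<Rightarrow> 'a \<Rightarrow> ('a \<times> 'b \<times> 'c) pmf" where
  "triple_X P x = embed_pmf (\<lambda>(x', y, z).
     if pZ P z = 0 then 0 else pXYZ P x' y z * pZ_given_X P z x / pZ P z)"

definition pair_AZY :: "('a \<times> 'b \<times> 'c) pmf \<Rightarrow> ('a \<times> 'b) pmf" where
  "pair_AZY P = embed_pmf (\<lambda>(x, y).
     if pY P y = 0 then 0 else pY P y * measure_pmf.prob (triple_Y P y) {t. fst t = x})"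

definition pair_XBZX :: "('a \<times> 'b \<times> 'c) pmf \<Rightarrow> ('a \<times> 'b) pmf" where
  "pair_XBZX P = embed_pmf (\<lambda>(x, y).
     if pX P x = 0 then 0 else pX P x * measure_pmf.prob (triple_X P x) {t. fst (snd t) = y})"

definition MI :: "('a \<times> 'b) pmf \<Rightarrow> real" where
  "MI q = prob_space.mutual_information (measure_pmf q) 2
            (count_space UNIV) (count_space UNIV) fst snd"

end

theory Submission
  imports Defs
begin

text \<open>Both pairs have the joint law
  \<open>(x, y) \<mapsto> \<Sum>\<^sub>z Pr(X = x, Z = z) Pr(Y = y, Z = z) / Pr(Z = z)\<close>,
  i.e. that of (X, Y) made conditionally independent given Z.  Indeed, \<open>A\<^sub>y\<close> is X resampled
  through a Z drawn from \<open>Pr(Z | Y = y)\<close>, and \<open>B\<^sub>x\<close> is Y resampled through a Z drawn from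
  \<open>Pr(Z | X = x)\<close>; the formula is symmetric in X and Y.\<close>

lemma measure_pmf_prob_range:
  fixes P :: "'a::finite pmf" and f :: "'d::finite \<Rightarrow> 'a"
  assumes "inj f"
  shows "measure_pmf.prob P (range f) = (\<Sum>u\<in>UNIV. pmf P (f u))"
  using assms by (simp add: measure_measure_pmf_finite sum.reindex)

lemma sum_UNIV_prod:
  "(\<Sum>u\<in>(UNIV :: ('a::finite \<times> 'b::finite) set). f u) = (\<Sum>x\<in>UNIV. \<Sum>y\<in>UNIV. f (x, y))"
  by (simp add: UNIV_Times_UNIV[symmetric] sum.cartesian_product del: UNIV_Times_UNIV)

lemma pmf_embed_pmf_finite:
  fixes f :: "'a::finite \<Rightarrow> real"
  assumes "\<And>t. 0 \<le> f t" and "sum f UNIV = 1"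
  shows "pmf (embed_pmf f) = f"
proof
  fix t
  have "(\<integral>\<^sup>+t. ennreal (f t) \<partial>count_space UNIV) = ennreal (sum f UNIV)"
    using assms(1) by (simp add: nn_integral_count_space_finite sum_ennreal)
  then show "pmf (embed_pmf f) t = f t"
    using assms by (simp add: pmf_embed_pmf)
qed

lemma measure_pmf_prob_fst_eq_sum:
  fixes Q :: "('a::finite \<times> 'b::finite \<times> 'c::finite) pmf"
  shows "measure_pmf.prob Q {t. fst t = x} = (\<Sum>y\<in>UNIV. \<Sum>z\<in>UNIV. pmf Q (x, y, z))"
    (is "?lhs = ?rhs")
proof -
  have "?lhs = measure_pmf.prob Q (range (\<lambda>(y, z). (x, y, z)))"
    by (rule arg_cong[where f = "measure_pmf.prob Q"]) (force simp: image_iff)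
  also have "\<dots> = ?rhs"
    by (subst measure_pmf_prob_range) (auto simp: inj_def sum_UNIV_prod)
  finally show ?thesis .
qed

lemma measure_pmf_prob_fst_snd_eq_sum:
  fixes Q :: "('a::finite \<times> 'b::finite \<times> 'c::finite) pmf"
  shows "measure_pmf.prob Q {t. fst (snd t) = y} = (\<Sum>x\<in>UNIV. \<Sum>z\<in>UNIV. pmf Q (x, y, z))"
    (is "?lhs = ?rhs")
proof -
  have "?lhs = measure_pmf.prob Q (range (\<lambda>(x, z). (x, y, z)))"
    by (rule arg_cong[where f = "measure_pmf.prob Q"]) (force simp: image_iff)
  also have "\<dots> = ?rhs"
    by (subst measure_pmf_prob_range) (auto simp: inj_def sum_UNIV_prod)
  finally show ?thesis .
qed

definition pXZ :: "('a \<times> 'b \<times> 'c) pmf \<Rightarrow> 'a \<Rightarrow> 'c \<Rightarrow> real" where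
  "pXZ P x z = measure_pmf.prob P {w. fst w = x \<and> snd (snd w) = z}"

definition pYZ :: "('a \<times> 'b \<times> 'c) pmf \<Rightarrow> 'b \<Rightarrow> 'c \<Rightarrow> real" where
  "pYZ P y z = measure_pmf.prob P {w. fst (snd w) = y \<and> snd (snd w) = z}"

text \<open>The law of (X', Y', Z') where Z' has law \<open>w\<close> and (X', Y') given Z' = z is distributed
  as (X, Y) given Z = z.\<close>
definition Z_reweighting ::
  "('a \<times> 'b \<times> 'c) pmf \<Rightarrow> ('c \<Rightarrow> real) \<Rightarrow> 'a \<times> 'b \<times> 'c \<Rightarrow> real" where
  "Z_reweighting P w = (\<lambda>(x, y, z). if pZ P z = 0 then 0 else pXYZ P x y z * w z / pZ P z)"

definition abs_cont_Z_law :: "('a \<times> 'b \<times> 'c) pmf \<Rightarrow> ('c \<Rightarrow> real) \<Rightarrow> bool" where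
  "abs_cont_Z_law P w \<longleftrightarrow>
     (\<forall>z. 0 \<le> w z) \<and> sum w UNIV = 1 \<and> (\<forall>z. pZ P z = 0 \<longrightarrow> w z = 0)"

definition pXY_indep_given_Z :: "('a \<times> 'b \<times> 'c) pmf \<Rightarrow> 'a \<Rightarrow> 'b \<Rightarrow> real" where
  "pXY_indep_given_Z P x y =
     (\<Sum>z\<in>UNIV. if pZ P z = 0 then 0 else pXZ P x z * pYZ P y z / pZ P z)"

lemma triple_Y_eq_Z_reweighting:
  "triple_Y P y = embed_pmf (Z_reweighting P (\<lambda>z. pYZ P y z / pY P y))"
  unfolding triple_Y_def Z_reweighting_def pZ_given_Y_def pYZ_def ..

lemma triple_X_eq_Z_reweighting:
  "triple_X P x = embed_pmf (Z_reweighting P (\<lambda>z. pXZ P x z / pX P x))"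
  unfolding triple_X_def Z_reweighting_def pZ_given_X_def pXZ_def ..

context
  fixes P :: "('a::finite \<times> 'b::finite \<times> 'c::finite) pmf"
begin

lemma pXZ_eq_sum: "pXZ P x z = (\<Sum>y\<in>UNIV. pmf P (x, y, z))" (is "?lhs = ?rhs")
proof -
  have "?lhs = measure_pmf.prob P (range (\<lambda>y. (x, y, z)))"
    unfolding pXZ_def by (rule arg_cong[where f = "measure_pmf.prob P"]) auto
  also have "\<dots> = ?rhs"
    by (rule measure_pmf_prob_range) (simp add: inj_def)
  finally show ?thesis .
qed

lemma pYZ_eq_sum: "pYZ P y z = (\<Sum>x\<in>UNIV. pmf P (x, y, z))" (is "?lhs = ?rhs")
proof -
  have "?lhs = measure_pmf.prob P (range (\<lambda>x. (x, y, z)))"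
    unfolding pYZ_def by (rule arg_cong[where f = "measure_pmf.prob P"]) auto
  also have "\<dots> = ?rhs"
    by (rule measure_pmf_prob_range) (simp add: inj_def)
  finally show ?thesis .
qed

lemma pZ_eq_sum: "pZ P z = (\<Sum>x\<in>UNIV. \<Sum>y\<in>UNIV. pmf P (x, y, z))" (is "?lhs = ?rhs")
proof -
  have "?lhs = measure_pmf.prob P (range (\<lambda>(x, y). (x, y, z)))"
    unfolding pZ_def by (rule arg_cong[where f = "measure_pmf.prob P"]) (force simp: image_iff)
  also have "\<dots> = ?rhs"
    by (subst measure_pmf_prob_range) (auto simp: inj_def sum_UNIV_prod)
  finally show ?thesis .
qed

lemma pX_eq_sum_pXZ: "pX P x = (\<Sum>z\<in>UNIV. pXZ P x z)"
  by (simp add: pX_def measure_pmf_prob_fst_eq_sum pXZ_eq_sum sum.swap[of _ "UNIV :: 'b set"])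

lemma pY_eq_sum_pYZ: "pY P y = (\<Sum>z\<in>UNIV. pYZ P y z)"
  by (simp add: pY_def measure_pmf_prob_fst_snd_eq_sum pYZ_eq_sum sum.swap[of _ "UNIV :: 'a set"])

lemma pXZ_nonneg: "0 \<le> pXZ P x z"
  by (simp add: pXZ_def)

lemma pYZ_nonneg: "0 \<le> pYZ P y z"
  by (simp add: pYZ_def)

lemma pXZ_le_pX: "pXZ P x z \<le> pX P x"
  unfolding pXZ_def pX_def by (rule measure_pmf.finite_measure_mono) auto

lemma pYZ_le_pY: "pYZ P y z \<le> pY P y"
  unfolding pYZ_def pY_def by (rule measure_pmf.finite_measure_mono) auto

lemma pXZ_le_pZ: "pXZ P x z \<le> pZ P z"
  unfolding pXZ_def pZ_def by (rule measure_pmf.finite_measure_mono) auto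

lemma pYZ_le_pZ: "pYZ P y z \<le> pZ P z"
  unfolding pYZ_def pZ_def by (rule measure_pmf.finite_measure_mono) auto

lemma sum_Z_reweighting:
  assumes "\<And>z. pZ P z = 0 \<Longrightarrow> w z = 0"
  shows "(\<Sum>t\<in>UNIV. Z_reweighting P w t) = (\<Sum>z\<in>UNIV. w z)"
proof -
  have "(\<Sum>t\<in>UNIV. Z_reweighting P w t) =
      (\<Sum>z\<in>UNIV. \<Sum>x\<in>UNIV. \<Sum>y\<in>UNIV.
        if pZ P z = 0 then 0 else pmf P (x, y, z) * w z / pZ P z)"
    unfolding Z_reweighting_def pXYZ_def
    by (simp add: sum_UNIV_prod sum.swap[of _ "UNIV :: 'c set"])
  also have "\<dots> = (\<Sum>z\<in>UNIV. w z)"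
  proof (rule sum.cong[OF refl])
    fix z
    have "(\<Sum>x\<in>UNIV. \<Sum>y\<in>UNIV. pmf P (x, y, z) * w z / pZ P z) = pZ P z * w z / pZ P z"
      by (simp add: pZ_eq_sum sum_distrib_right sum_divide_distrib)
    then show "(\<Sum>x\<in>UNIV. \<Sum>y\<in>UNIV.
        if pZ P z = 0 then 0 else pmf P (x, y, z) * w z / pZ P z) = w z"
      using assms[of z] by (cases "pZ P z = 0") auto
  qed
  finally show ?thesis .
qed

lemma pmf_embed_Z_reweighting:
  assumes "abs_cont_Z_law P w"
  shows "pmf (embed_pmf (Z_reweighting P w)) = Z_reweighting P w"
proof (rule pmf_embed_pmf_finite)
  show "0 \<le> Z_reweighting P w t" for t
    using assms
    by (auto simp: abs_cont_Z_law_def Z_reweighting_def pXYZ_def pZ_def split: prod.split)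
  show "sum (Z_reweighting P w) UNIV = 1"
    using assms sum_Z_reweighting[of w] by (simp add: abs_cont_Z_law_def)
qed

lemma measure_pmf_prob_fst_Z_reweighting:
  assumes "abs_cont_Z_law P w"
  shows "measure_pmf.prob (embed_pmf (Z_reweighting P w)) {t. fst t = x} =
    (\<Sum>z\<in>UNIV. if pZ P z = 0 then 0 else pXZ P x z * w z / pZ P z)"
proof -
  have "measure_pmf.prob (embed_pmf (Z_reweighting P w)) {t. fst t = x} =
      (\<Sum>z\<in>UNIV. \<Sum>y\<in>UNIV. Z_reweighting P w (x, y, z))"
    by (simp add: measure_pmf_prob_fst_eq_sum pmf_embed_Z_reweighting[OF assms]
        sum.swap[of _ "UNIV :: 'b set"])
  also have "\<dots> = (\<Sum>z\<in>UNIV. if pZ P z = 0 then 0 else pXZ P x z * w z / pZ P z)"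
    unfolding Z_reweighting_def pXYZ_def
    by (rule sum.cong[OF refl]) (simp add: pXZ_eq_sum sum_distrib_right sum_divide_distrib)
  finally show ?thesis .
qed

lemma measure_pmf_prob_fst_snd_Z_reweighting:
  assumes "abs_cont_Z_law P w"
  shows "measure_pmf.prob (embed_pmf (Z_reweighting P w)) {t. fst (snd t) = y} =
    (\<Sum>z\<in>UNIV. if pZ P z = 0 then 0 else pYZ P y z * w z / pZ P z)"
proof -
  have "measure_pmf.prob (embed_pmf (Z_reweighting P w)) {t. fst (snd t) = y} =
      (\<Sum>z\<in>UNIV. \<Sum>x\<in>UNIV. Z_reweighting P w (x, y, z))"
    by (simp add: measure_pmf_prob_fst_snd_eq_sum pmf_embed_Z_reweighting[OF assms]
        sum.swap[of _ "UNIV :: 'a set"])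
  also have "\<dots> = (\<Sum>z\<in>UNIV. if pZ P z = 0 then 0 else pYZ P y z * w z / pZ P z)"
    unfolding Z_reweighting_def pXYZ_def
    by (rule sum.cong[OF refl]) (simp add: pYZ_eq_sum sum_distrib_right sum_divide_distrib)
  finally show ?thesis .
qed

lemma abs_cont_Z_law_given_Y:
  assumes "pY P y \<noteq> 0"
  shows "abs_cont_Z_law P (\<lambda>z. pYZ P y z / pY P y)"
  unfolding abs_cont_Z_law_def
proof (intro conjI allI impI)
  show "0 \<le> pYZ P y z / pY P y" for z
    by (simp add: pYZ_nonneg pY_def)
  show "(\<Sum>z\<in>UNIV. pYZ P y z / pY P y) = 1"
    using assms by (simp add: sum_divide_distrib[symmetric] pY_eq_sum_pYZ[symmetric])
  show "pYZ P y z / pY P y = 0" if "pZ P z = 0" for z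
    using pYZ_le_pZ[of y z] pYZ_nonneg[of y z] that by simp
qed

lemma abs_cont_Z_law_given_X:
  assumes "pX P x \<noteq> 0"
  shows "abs_cont_Z_law P (\<lambda>z. pXZ P x z / pX P x)"
  unfolding abs_cont_Z_law_def
proof (intro conjI allI impI)
  show "0 \<le> pXZ P x z / pX P x" for z
    by (simp add: pXZ_nonneg pX_def)
  show "(\<Sum>z\<in>UNIV. pXZ P x z / pX P x) = 1"
    using assms by (simp add: sum_divide_distrib[symmetric] pX_eq_sum_pXZ[symmetric])
  show "pXZ P x z / pX P x = 0" if "pZ P z = 0" for z
    using pXZ_le_pZ[of x z] pXZ_nonneg[of x z] that by simp
qed

lemma pair_AZY_eq_pXY_indep_given_Z: "pair_AZY P = embed_pmf (\<lambda>(x, y). pXY_indep_given_Z P x y)"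
proof -
  have "(if pY P y = 0 then 0
      else pY P y * measure_pmf.prob (triple_Y P y) {t. fst t = x}) = pXY_indep_given_Z P x y"
    for x y
  proof (cases "pY P y = 0")
    case True
    then have "pYZ P y z = 0" for z
      using pYZ_le_pY[of y z] pYZ_nonneg[of y z] by simp
    then have "pXY_indep_given_Z P x y = 0"
      unfolding pXY_indep_given_Z_def by (intro sum.neutral ballI) simp
    with True show ?thesis
      by simp
  next
    case False
    then have "pY P y * measure_pmf.prob (triple_Y P y) {t. fst t = x} =
        pY P y * (\<Sum>z\<in>UNIV.
          if pZ P z = 0 then 0 else pXZ P x z * (pYZ P y z / pY P y) / pZ P z)"
      by (simp add: triple_Y_eq_Z_reweighting measure_pmf_prob_fst_Z_reweighting
          abs_cont_Z_law_given_Y)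
    also have "\<dots> = pXY_indep_given_Z P x y"
      using False unfolding pXY_indep_given_Z_def sum_distrib_left by (intro sum.cong) auto
    finally show ?thesis
      using False by simp
  qed
  then show ?thesis
    unfolding pair_AZY_def by simp
qed

lemma pair_XBZX_eq_pXY_indep_given_Z: "pair_XBZX P = embed_pmf (\<lambda>(x, y). pXY_indep_given_Z P x y)"
proof -
  have "(if pX P x = 0 then 0
      else pX P x * measure_pmf.prob (triple_X P x) {t. fst (snd t) = y}) = pXY_indep_given_Z P x y"
    for x y
  proof (cases "pX P x = 0")
    case True
    then have "pXZ P x z = 0" for z
      using pXZ_le_pX[of x z] pXZ_nonneg[of x z] by simp
    then have "pXY_indep_given_Z P x y = 0"
      unfolding pXY_indep_given_Z_def by (intro sum.neutral ballI) simp
    with True show ?thesis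
      by simp
  next
    case False
    then have "pX P x * measure_pmf.prob (triple_X P x) {t. fst (snd t) = y} =
        pX P x * (\<Sum>z\<in>UNIV.
          if pZ P z = 0 then 0 else pYZ P y z * (pXZ P x z / pX P x) / pZ P z)"
      by (simp add: triple_X_eq_Z_reweighting measure_pmf_prob_fst_snd_Z_reweighting
          abs_cont_Z_law_given_X)
    also have "\<dots> = pXY_indep_given_Z P x y"
      using False unfolding pXY_indep_given_Z_def sum_distrib_left by (intro sum.cong) auto
    finally show ?thesis
      using False by simp
  qed
  then show ?thesis
    unfolding pair_XBZX_def by simp
qed

end

theorem lemma7:
  fixes P :: "('a::finite \<times> 'b::finite \<times> 'c::finite) pmf"
  shows "MI (pair_AZY P) = MI (pair_XBZX P)"
proof -
  have "pair_AZY P = pair_XBZX P"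
    by (simp only: pair_AZY_eq_pXY_indep_given_Z pair_XBZX_eq_pXY_indep_given_Z)
  then show ?thesis
    by simp
qed

end
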